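(* Let $f\in\{0,1\}^n$ be tilde-non-isometric. Then either $f$ has a $1$-tilde-error overlap of type S, or $f$ has a $2$-tilde-error overlap.
   Context: Words are over $\{0,1\}$. For $w$ of length $n$: $w[i]$ is its $i$-th symbol, $\mathrm{pre}_l(w)=w[1..l]$ and $\mathrm{suf}_l(w)=w[n-l+1..n]$. A word is $f$-free if it does not contain $f$ as a factor. Operations: the replacement $R_i$ flips the symbol at position $i$. The swap $S_i$ is defined when $w[i]\ne w[i+1]$ and exchanges these two symbols. $\mathrm{dist}_\sim(u,v)$ is the minimum number of replacements and swaps transforming $u$ into the equal-length word $v$. A tilde-transformation from $u$ to $v$ is a sequence of words from $u$ to $v$, each obtained from the previous by one replacement or swap. It is minimal if it uses exactly $\mathrm{dist}_\sim(u,v)$ operations and each position is modified by at most one operation (a swap $S_i$ modifies positions $i,i+1$). A word $f$ of length $n$ is tilde-isometric if, for every $m>n$ and all $f$-free $u,v\in\{0,1\}^m$, there exists a minimal tilde-transformation from $u$ to $v$ all of whose words are $f$-free. Otherwise it is tilde-non-isometric. $f$ has a $q$-tilde-error overlap of length $l$, where $1\le l\le n-1$, if $\mathrm{dist}_\sim(\mathrm{pre}_l(f),\mathrm{suf}_l(f))=q$. A $1$-tilde-error overlap of length $l$ is of type S if $\mathrm{suf}_l(f)=S_i(\mathrm{pre}_l(f))$ for some $i$. *)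

theory Defs
  imports Main "HOL-Library.Sublist"
begin

text \<open>Binary words are lists of booleans (False = 0, True = 1).
  Positions are 0-based here (position i in the paper is index i-1).\<close>

type_synonym word = "bool list"

definition pre :: "nat \<Rightarrow> word \<Rightarrow> word" where
  "pre l w = take l w"

definition suf :: "nat \<Rightarrow> word \<Rightarrow> word" where
  "suf l w = drop (length w - l) w"

definition free :: "word \<Rightarrow> word \<Rightarrow> bool" where
  "free f w \<longleftrightarrow> \<not> sublist f w"

definition repl :: "nat \<Rightarrow> word \<Rightarrow> word" where
  "repl i w = w[i := \<not> w ! i]"

definition swp :: "nat \<Rightarrow> word \<Rightarrow> word" where
  "swp i w = w[i := w ! Suc i, Suc i := w ! i]"

datatype op = R nat | S nat

fun applicable :: "op \<Rightarrow> word \<Rightarrow> bool" where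
  "applicable (R i) w \<longleftrightarrow> i < length w"
| "applicable (S i) w \<longleftrightarrow> Suc i < length w \<and> w ! i \<noteq> w ! Suc i"

fun apply_op :: "op \<Rightarrow> word \<Rightarrow> word" where
  "apply_op (R i) w = repl i w"
| "apply_op (S i) w = swp i w"

fun modified :: "op \<Rightarrow> nat set" where
  "modified (R i) = {i}"
| "modified (S i) = {i, Suc i}"

fun valid_ops :: "op list \<Rightarrow> word \<Rightarrow> bool" where
  "valid_ops [] u = True"
| "valid_ops (p # ps) u \<longleftrightarrow> applicable p u \<and> valid_ops ps (apply_op p u)"

fun result :: "op list \<Rightarrow> word \<Rightarrow> word" where
  "result [] u = u"
| "result (p # ps) u = result ps (apply_op p u)"

fun trace :: "op list \<Rightarrow> word \<Rightarrow> word list" where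
  "trace [] u = [u]"
| "trace (p # ps) u = u # trace ps (apply_op p u)"

definition transforms :: "op list \<Rightarrow> word \<Rightarrow> word \<Rightarrow> bool" where
  "transforms ps u v \<longleftrightarrow> valid_ops ps u \<and> result ps u = v"

definition dist_tilde :: "word \<Rightarrow> word \<Rightarrow> nat" where
  "dist_tilde u v = (LEAST n. \<exists>ps. transforms ps u v \<and> length ps = n)"

definition minimal_transf :: "op list \<Rightarrow> word \<Rightarrow> word \<Rightarrow> bool" where
  "minimal_transf ps u v \<longleftrightarrow> transforms ps u v \<and> length ps = dist_tilde u v \<and>
     (\<forall>j k. j < length ps \<longrightarrow> k < length ps \<longrightarrow> j \<noteq> k \<longrightarrow>
        modified (ps ! j) \<inter> modified (ps ! k) = {})"

definition tilde_isometric :: "word \<Rightarrow> bool" where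
  "tilde_isometric f \<longleftrightarrow>
     (\<forall>m > length f. \<forall>u v. length u = m \<longrightarrow> length v = m \<longrightarrow> free f u \<longrightarrow> free f v \<longrightarrow>
        (\<exists>ps. minimal_transf ps u v \<and> (\<forall>w \<in> set (trace ps u). free f w)))"

definition tilde_error_overlap :: "nat \<Rightarrow> word \<Rightarrow> nat \<Rightarrow> bool" where
  "tilde_error_overlap q f l \<longleftrightarrow>
     1 \<le> l \<and> l \<le> length f - 1 \<and> dist_tilde (pre l f) (suf l f) = q"

definition overlap_type_S :: "word \<Rightarrow> nat \<Rightarrow> bool" where
  "overlap_type_S f l \<longleftrightarrow> tilde_error_overlap 1 f l \<and>
     (\<exists>i. applicable (S i) (pre l f) \<and> suf l f = swp i (pre l f))"

end

theory Submission
  imports Defs "HOL-Library.Disjoint_Sets"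
begin

text \<open>
  Operations modifying pairwise disjoint positions act together as the flip of the union of these
  positions, and every transformation can be rearranged, without getting longer, into such a
  disjoint family. So the distance of \<open>u\<close> and \<open>v\<close> is the least size of a disjoint family of
  operations covering the positions where \<open>u\<close> and \<open>v\<close> differ.

  Given \<open>f\<close>-free words \<open>u\<close> and \<open>v\<close>, take such a minimal cover. If applying one of its operations
  keeps \<open>u\<close> \<open>f\<close>-free, apply it and proceed by induction on the distance. Otherwise each operation
  \<open>p\<close> of the cover creates an occurrence of \<open>f\<close> whose window meets \<open>p\<close> and, as \<open>v\<close> is \<open>f\<close>-free,
  some other operation of the cover. Scanning the operations from left to right one finds two
  consecutive operations \<open>p\<close> and \<open>q\<close> whose windows both contain the last position of \<open>p\<close> and the
  first position of \<open>q\<close>. The occurrences of \<open>f\<close> in the words obtained by applying \<open>p\<close> and by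
  applying \<open>q\<close> then overlap; on the overlap the two words differ in these two positions and are at
  distance at most 2, so the overlap is a 1-error overlap of type S or a 2-error overlap of \<open>f\<close>.
\<close>

section \<open>Flipping sets of positions\<close>

definition flip :: "nat set \<Rightarrow> word \<Rightarrow> word" where
  "flip A u = map (\<lambda>k. if k \<in> A then \<not> u ! k else u ! k) [0..<length u]"

lemma length_flip [simp]: "length (flip A u) = length u"
  by (simp add: flip_def)

lemma nth_flip [simp]: "k < length u \<Longrightarrow> flip A u ! k = (if k \<in> A then \<not> u ! k else u ! k)"
  by (simp add: flip_def)

lemma flip_empty [simp]: "flip {} u = u"
  by (rule nth_equalityI) auto

lemma flip_flip: "A \<inter> B = {} \<Longrightarrow> flip A (flip B u) = flip (A \<union> B) u"
  by (rule nth_equalityI) auto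

lemma flip_flip_same [simp]: "flip A (flip A u) = u"
  by (rule nth_equalityI) auto

definition mismatch :: "word \<Rightarrow> word \<Rightarrow> nat set" where
  "mismatch u v = {k. k < length u \<and> u ! k \<noteq> v ! k}"

lemma finite_mismatch [simp]: "finite (mismatch u v)"
  by (simp add: mismatch_def)

lemma flip_mismatch: "length v = length u \<Longrightarrow> flip (mismatch u v) u = v"
  by (rule nth_equalityI) (auto simp: mismatch_def)

lemma mismatch_flip: "mismatch u (flip A u) = A \<inter> {..<length u}"
  by (auto simp: mismatch_def split: if_splits)

lemma mismatch_flip_flip: "mismatch (flip B u) (flip A u) = ((A - B) \<union> (B - A)) \<inter> {..<length u}"
  by (auto simp: mismatch_def split: if_splits)

lemma modified_nonempty: "modified p \<noteq> {}"
  by (cases p) auto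

lemma finite_modified [simp]: "finite (modified p)"
  by (cases p) auto

lemma card_modified_le: "card (modified p) \<le> 2"
  by (cases p) (auto simp: card_insert_if)

lemma modified_subset_applicable: "applicable p u \<Longrightarrow> modified p \<subseteq> {..<length u}"
  by (cases p) auto

lemma length_apply_op [simp]: "length (apply_op p u) = length u"
  by (cases p) (auto simp: repl_def swp_def)

lemma apply_op_eq_flip: "applicable p u \<Longrightarrow> apply_op p u = flip (modified p) u"
  by (cases p) (auto simp: repl_def swp_def nth_list_update intro!: nth_equalityI)

lemma applicable_flip:
  "applicable q u \<Longrightarrow> modified q \<inter> A = {} \<or> modified q \<subseteq> A \<Longrightarrow> applicable q (flip A u)"
  by (cases q) auto

lemma length_result: "valid_ops ps u \<Longrightarrow> length (result ps u) = length u"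
  by (induction ps arbitrary: u) auto

lemma valid_ops_modified_subset:
  "valid_ops ps u \<Longrightarrow> q \<in> set ps \<Longrightarrow> modified q \<subseteq> {..<length u}"
proof (induction ps arbitrary: u)
  case (Cons p ps)
  then show ?case
    using Cons.IH[of "apply_op p u"] by (cases "q = p") (auto dest: modified_subset_applicable)
qed simp

definition disjoint_ops :: "op list \<Rightarrow> bool" where
  "disjoint_ops ps \<longleftrightarrow> distinct ps \<and> disjoint_family_on modified (set ps)"

lemma disjoint_ops_iff_nth:
  "disjoint_ops ps \<longleftrightarrow> (\<forall>j k. j < length ps \<longrightarrow> k < length ps \<longrightarrow> j \<noteq> k \<longrightarrow>
     modified (ps ! j) \<inter> modified (ps ! k) = {})" (is "_ \<longleftrightarrow> ?nth")
proof
  assume "disjoint_ops ps"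
  then show ?nth
    by (auto simp: disjoint_ops_def disjoint_family_on_def nth_eq_iff_index_eq)
next
  assume nth: ?nth
  then have "distinct ps"
    using modified_nonempty by (metis Int_absorb distinct_conv_nth)
  moreover have "disjoint_family_on modified (set ps)"
    unfolding disjoint_family_on_def by (metis in_set_conv_nth nth)
  ultimately show "disjoint_ops ps"
    by (simp add: disjoint_ops_def)
qed

lemma minimal_transf_iff:
  "minimal_transf ps u v \<longleftrightarrow> transforms ps u v \<and> length ps = dist_tilde u v \<and> disjoint_ops ps"
  by (simp add: minimal_transf_def disjoint_ops_iff_nth)

lemma disjoint_ops_Cons:
  "disjoint_ops (p # ps) \<longleftrightarrow> disjoint_ops ps \<and> (\<forall>q\<in>set ps. modified p \<inter> modified q = {})"
  using modified_nonempty
  unfolding disjoint_ops_def disjoint_family_on_def by (auto; blast)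

section \<open>Disjoint covers and the distance\<close>

definition cover :: "op set \<Rightarrow> word \<Rightarrow> nat set \<Rightarrow> bool" where
  "cover Q u M \<longleftrightarrow> finite Q \<and> (\<forall>q\<in>Q. applicable q u) \<and> disjoint_family_on modified Q \<and>
     \<Union>(modified ` Q) = M"

lemma valid_ops_disjoint:
  "(\<forall>q\<in>set ps. applicable q u) \<Longrightarrow> disjoint_ops ps \<Longrightarrow> valid_ops ps u"
proof (induction ps arbitrary: u)
  case (Cons p ps)
  then have "\<forall>q\<in>set ps. applicable q (flip (modified p) u)"
    by (auto intro!: applicable_flip simp: disjoint_ops_Cons Int_commute)
  with Cons show ?case
    by (simp add: disjoint_ops_Cons apply_op_eq_flip)
qed simp

lemma result_disjoint_ops:
  "valid_ops ps u \<Longrightarrow> disjoint_ops ps \<Longrightarrow> result ps u = flip (\<Union>(modified ` set ps)) u"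
proof (induction ps arbitrary: u)
  case (Cons p ps)
  then have "result (p # ps) u = flip (\<Union>(modified ` set ps)) (apply_op p u)"
    by (simp add: disjoint_ops_Cons)
  also have "\<dots> = flip (\<Union>(modified ` set ps)) (flip (modified p) u)"
    using Cons.prems(1) by (simp add: apply_op_eq_flip)
  also have "\<dots> = flip (\<Union>(modified ` set (p # ps))) u"
    using Cons.prems(2) by (subst flip_flip) (auto simp: disjoint_ops_Cons Un_commute)
  finally show ?case .
qed simp

lemma transforms_of_cover:
  assumes cov: "cover Q u (mismatch u v)" and len: "length v = length u"
  obtains ps where "transforms ps u v" and "length ps = card Q" and "disjoint_ops ps"
proof -
  have "finite Q"
    using cov by (simp add: cover_def)
  then obtain ps where ps: "set ps = Q" "distinct ps"
    using finite_distinct_list by blast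
  have disj: "disjoint_ops ps"
    using cov ps by (simp add: cover_def disjoint_ops_def)
  have valid: "valid_ops ps u"
    using cov ps(1) disj by (intro valid_ops_disjoint) (auto simp: cover_def)
  have "result ps u = flip (mismatch u v) u"
    using cov ps(1) by (simp add: result_disjoint_ops[OF valid disj] cover_def)
  then have "transforms ps u v"
    using valid len by (simp add: transforms_def flip_mismatch)
  moreover have "length ps = card Q"
    using distinct_card[OF ps(2)] ps(1) by simp
  ultimately show ?thesis
    using disj by (rule that)
qed

lemma dist_tilde_le_length: "transforms ps u v \<Longrightarrow> dist_tilde u v \<le> length ps"
  unfolding dist_tilde_def by (rule Least_le) blast

lemma dist_tilde_le_card_cover:
  "cover Q u (mismatch u v) \<Longrightarrow> length v = length u \<Longrightarrow> dist_tilde u v \<le> card Q"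
  by (metis transforms_of_cover dist_tilde_le_length)

lemma cover_replacements: "A \<subseteq> {..<length u} \<Longrightarrow> cover (R ` A) u A"
  by (auto simp: cover_def disjoint_family_on_def finite_subset)

lemma dist_tilde_attained:
  assumes "length v = length u"
  obtains ps where "transforms ps u v" and "length ps = dist_tilde u v"
proof -
  have "cover (R ` mismatch u v) u (mismatch u v)"
    by (rule cover_replacements) (auto simp: mismatch_def)
  then obtain ps where "transforms ps u v"
    using assms by (rule transforms_of_cover)
  then have "\<exists>n ps. transforms ps u v \<and> length ps = n"
    by blast
  then have "\<exists>ps. transforms ps u v \<and> length ps = dist_tilde u v"
    unfolding dist_tilde_def by (rule LeastI_ex)
  then obtain ps where "transforms ps u v" "length ps = dist_tilde u v"
    by blast
  then show ?thesis
    by (rule that)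
qed

lemma cover_Un:
  assumes "cover Q1 u M1" and "cover Q2 u M2" and "M1 \<inter> M2 = {}"
  shows "cover (Q1 \<union> Q2) u (M1 \<union> M2)"
proof -
  have "modified q1 \<inter> modified q2 = {}" if "q1 \<in> Q1" "q2 \<in> Q2" for q1 q2
    using assms that unfolding cover_def by blast
  then have "disjoint_family_on modified (Q1 \<union> Q2)"
    using assms unfolding cover_def disjoint_family_on_def by (metis Int_commute Un_iff)
  with assms show ?thesis
    by (auto simp: cover_def)
qed

lemma cover_subset: "cover Q u M \<Longrightarrow> Q0 \<subseteq> Q \<Longrightarrow> cover Q0 u (\<Union>(modified ` Q0))"
  by (auto simp: cover_def finite_subset disjoint_family_on_mono)

lemma cover_flip:
  "cover Q u M \<Longrightarrow> \<forall>q\<in>Q. modified q \<inter> T = {} \<Longrightarrow> cover Q (flip T u) M"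
  by (simp add: cover_def applicable_flip)

lemma cover_part_of_op:
  assumes "applicable p u"
  obtains B where "cover B u (modified p \<inter> M)" and "card B \<le> 1"
proof (cases "modified p \<subseteq> M")
  case True
  then have "cover {p} u (modified p \<inter> M)"
    using assms by (auto simp: cover_def disjoint_family_on_def)
  then show ?thesis
    by (rule that) simp
next
  case False
  then have "card (modified p \<inter> M) < card (modified p)"
    by (intro psubset_card_mono) auto
  then have "card (R ` (modified p \<inter> M)) \<le> 1"
    using card_modified_le[of p] card_image_le[of "modified p \<inter> M" R] by simp
  moreover have "cover (R ` (modified p \<inter> M)) u (modified p \<inter> M)"
    using modified_subset_applicable[OF assms] by (intro cover_replacements) auto
  ultimately show ?thesis
    by (intro that)
qed

text \<open>An operation that meets \<open>T\<close> has at most one modified position outside \<open>T\<close>.\<close>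
lemma card_modified_outside_le:
  assumes "finite X" and "\<And>x. x \<in> X \<Longrightarrow> modified x \<inter> T \<noteq> {}"
  shows "card (\<Union>(modified ` X) - T) \<le> card X"
proof -
  have "card (modified x - T) \<le> 1" if "x \<in> X" for x
  proof -
    have "card (modified x - T) < card (modified x)"
      using assms(2)[OF that] by (intro psubset_card_mono) auto
    then show ?thesis
      using card_modified_le[of x] by simp
  qed
  then have "(\<Sum>x\<in>X. card (modified x - T)) \<le> card X"
    using sum_mono[of X "\<lambda>x. card (modified x - T)" "\<lambda>_. 1"] by simp
  moreover have "\<Union>(modified ` X) - T = (\<Union>x\<in>X. modified x - T)"
    by blast
  ultimately show ?thesis
    using card_UN_le[OF assms(1), of "\<lambda>x. modified x - T"] by simp
qed

text \<open>Operations avoiding \<open>T\<close> are kept, the others are cut down to replacements outside \<open>T\<close>.\<close>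
lemma cover_outside:
  assumes cov: "cover Q' w M'"
  obtains Q where "cover Q (flip T w) (M' - T)" and "card Q \<le> card Q'"
proof -
  define Q2 where "Q2 = {q\<in>Q'. modified q \<inter> T = {}}"
  define L where "L = \<Union>(modified ` (Q' - Q2)) - T"
  have fin: "finite Q'"
    using cov by (simp add: cover_def)
  have "cover Q2 w (\<Union>(modified ` Q2))"
    using cov by (rule cover_subset) (auto simp: Q2_def)
  then have cov2: "cover Q2 (flip T w) (\<Union>(modified ` Q2))"
    by (rule cover_flip) (simp add: Q2_def)
  have M'_minus_T: "M' - T = \<Union>(modified ` Q2) \<union> L"
    using cov by (auto simp: cover_def L_def Q2_def)
  have "L \<subseteq> {..<length w}"
    using cov modified_subset_applicable by (fastforce simp: cover_def L_def)
  then have covL: "cover (R ` L) (flip T w) L"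
    by (intro cover_replacements) simp
  have "\<Union>(modified ` Q2) \<inter> L = {}"
    using cov by (fastforce simp: cover_def disjoint_family_on_def L_def Q2_def)
  then have "cover (Q2 \<union> R ` L) (flip T w) (M' - T)"
    unfolding M'_minus_T using cov2 covL by (rule cover_Un[rotated 2])
  moreover have "card L \<le> card (Q' - Q2)"
    unfolding L_def using fin by (intro card_modified_outside_le) (auto simp: Q2_def)
  then have "card (Q2 \<union> R ` L) \<le> card Q'"
    using card_Un_le[of Q2 "R ` L"] card_image_le[of L R] card_Diff_subset[of Q2 Q'] card_mono[of Q' Q2]
      fin finite_subset[OF \<open>L \<subseteq> {..<length w}\<close>]
    by (simp add: Q2_def finite_subset)
  ultimately show ?thesis
    by (rule that)
qed

lemma cover_apply_op:
  assumes app: "applicable p u" and len: "length v = length u"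
    and cov: "cover Q' (apply_op p u) (mismatch (apply_op p u) v)"
  obtains Q where "cover Q u (mismatch u v)" and "card Q \<le> Suc (card Q')"
proof -
  define T where "T = modified p"
  define M where "M = mismatch u v"
  have w: "apply_op p u = flip T u"
    using app by (simp add: apply_op_eq_flip T_def)
  have "mismatch (flip T u) v - T = M - T"
    using len by (auto simp: mismatch_def M_def)
  then obtain Q where covQ: "cover Q u (M - T)" and cardQ: "card Q \<le> card Q'"
    using cov unfolding w by (metis cover_outside flip_flip_same)
  obtain B where covB: "cover B u (T \<inter> M)" and cardB: "card B \<le> 1"
    using app unfolding T_def by (rule cover_part_of_op)
  have "cover (Q \<union> B) u ((M - T) \<union> (T \<inter> M))"
    using covQ covB by (rule cover_Un) auto
  moreover have "(M - T) \<union> (T \<inter> M) = M"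
    by blast
  moreover have "card (Q \<union> B) \<le> Suc (card Q')"
    using card_Un_le[of Q B] cardQ cardB by linarith
  ultimately show ?thesis
    unfolding M_def by (metis that)
qed

lemma cover_of_valid_ops:
  "valid_ops ps u \<Longrightarrow> \<exists>Q. cover Q u (mismatch u (result ps u)) \<and> card Q \<le> length ps"
proof (induction ps arbitrary: u)
  case Nil
  have "cover {} u (mismatch u u)"
    by (simp add: cover_def mismatch_def disjoint_family_on_def)
  then show ?case
    by auto
next
  case (Cons p ps)
  then obtain Q' where Q': "cover Q' (apply_op p u) (mismatch (apply_op p u) (result ps (apply_op p u)))"
    and card: "card Q' \<le> length ps"
    by auto
  have "length (result ps (apply_op p u)) = length u"
    using Cons.prems by (simp add: length_result)
  moreover have "applicable p u"
    using Cons.prems by simp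
  ultimately obtain Q where "cover Q u (mismatch u (result ps (apply_op p u)))"
      "card Q \<le> Suc (card Q')"
    using Q' by (elim cover_apply_op)
  with card show ?case
    by auto
qed

lemma minimal_cover_exists:
  assumes "length v = length u"
  obtains Q where "cover Q u (mismatch u v)" and "card Q = dist_tilde u v"
proof -
  obtain ps where ps: "transforms ps u v" "length ps = dist_tilde u v"
    using assms by (rule dist_tilde_attained)
  then obtain Q where Q: "cover Q u (mismatch u v)" "card Q \<le> dist_tilde u v"
    using cover_of_valid_ops unfolding transforms_def by metis
  moreover have "dist_tilde u v \<le> card Q"
    using Q(1) assms by (rule dist_tilde_le_card_cover)
  ultimately have "card Q = dist_tilde u v"
    by simp
  with Q(1) show ?thesis
    by (rule that)
qed

section \<open>Factors\<close>

definition occurs_at :: "word \<Rightarrow> nat \<Rightarrow> word \<Rightarrow> bool" where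
  "occurs_at f a w \<longleftrightarrow> a + length f \<le> length w \<and> take (length f) (drop a w) = f"

lemma sublist_iff_occurs_at: "sublist f w \<longleftrightarrow> (\<exists>a. occurs_at f a w)"
proof
  assume "sublist f w"
  then obtain xs ys where "w = xs @ f @ ys"
    by (auto simp: sublist_def)
  then show "\<exists>a. occurs_at f a w"
    by (auto simp: occurs_at_def intro!: exI[of _ "length xs"])
next
  assume "\<exists>a. occurs_at f a w"
  then obtain a where "take (length f) (drop a w) = f"
    by (auto simp: occurs_at_def)
  then have "w = take a w @ f @ drop (length f) (drop a w)"
    by (metis append_take_drop_id)
  then show "sublist f w"
    unfolding sublist_def by blast
qed

lemma occurs_at_nth:
  assumes "occurs_at f a w" and "k < length f"
  shows "w ! (a + k) = f ! k"
proof -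
  from assms(1) have len: "a + length f \<le> length w" and eq: "take (length f) (drop a w) = f"
    by (auto simp: occurs_at_def)
  have "take (length f) (drop a w) ! k = w ! (a + k)"
    using len assms(2) by simp
  then show ?thesis
    by (simp only: eq)
qed

lemma occurs_at_cong:
  assumes "occurs_at f a w" and "length w' = length w"
    and "\<And>k. a \<le> k \<Longrightarrow> k < a + length f \<Longrightarrow> w' ! k = w ! k"
  shows "occurs_at f a w'"
proof -
  have "take (length f) (drop a w') = f"
    using assms occurs_at_nth[OF assms(1)] unfolding occurs_at_def
    by (intro nth_equalityI) auto
  with assms show ?thesis
    by (simp add: occurs_at_def)
qed

lemma occurrence_meets_difference:
  assumes "occurs_at f a (flip T u)" and "\<not> occurs_at f a (flip T' u)"
  shows "\<exists>k\<in>(T - T') \<union> (T' - T). a \<le> k \<and> k < a + length f"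
proof (rule ccontr)
  assume none: "\<not> ?thesis"
  have "flip T' u ! k = flip T u ! k" if k: "a \<le> k" "k < a + length f" for k
  proof -
    have "k \<in> T \<longleftrightarrow> k \<in> T'"
      using none k by auto
    moreover have "k < length u"
      using assms(1) k by (simp add: occurs_at_def)
    ultimately show ?thesis
      by simp
  qed
  then have "occurs_at f a (flip T' u)"
    by (intro occurs_at_cong[OF assms(1)]) auto
  with assms(2) show False
    by contradiction
qed

text \<open>The part of \<open>q\<close> inside the window \<open>[b, b + L)\<close>, shifted to start at 0; a swap cut by
  the border of the window leaves a replacement.\<close>
fun restrict_op :: "nat \<Rightarrow> nat \<Rightarrow> op \<Rightarrow> op set" where
  "restrict_op b L (R i) = (if b \<le> i \<and> i < b + L then {R (i - b)} else {})"
| "restrict_op b L (S i) = (if b \<le> i \<and> Suc i < b + L then {S (i - b)}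
     else if b \<le> i \<and> i < b + L then {R (i - b)}
     else if b \<le> Suc i \<and> Suc i < b + L then {R (Suc i - b)} else {})"

lemma modified_restrict_op:
  "r \<in> restrict_op b L q \<Longrightarrow> modified r = {k. k < L \<and> b + k \<in> modified q}"
  by (cases q) (auto split: if_splits)

lemma restrict_op_unique: "r1 \<in> restrict_op b L q \<Longrightarrow> r2 \<in> restrict_op b L q \<Longrightarrow> r1 = r2"
  by (cases q) (auto split: if_splits)

lemma finite_restrict_op [simp]: "finite (restrict_op b L q)"
  by (cases q) auto

lemma card_restrict_op_le: "card (restrict_op b L q) \<le> 1"
  by (cases q) auto

lemma restrict_op_covers:
  "k < L \<Longrightarrow> b + k \<in> modified q \<Longrightarrow> \<exists>r\<in>restrict_op b L q. k \<in> modified r"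
  by (cases q) auto

lemma applicable_restrict_op:
  "applicable q y \<Longrightarrow> b + L \<le> length y \<Longrightarrow> r \<in> restrict_op b L q \<Longrightarrow>
     applicable r (take L (drop b y))"
  by (cases q) (auto split: if_splits)

lemma card_restrict_ops_le: "finite Q \<Longrightarrow> card (\<Union>q\<in>Q. restrict_op b L q) \<le> card Q"
  using card_UN_le[of Q "restrict_op b L"] sum_mono[of Q "\<lambda>q. card (restrict_op b L q)" "\<lambda>_. 1"]
    card_restrict_op_le by fastforce

lemma disjoint_family_on_restrict_ops:
  assumes disj: "disjoint_family_on modified Q"
  shows "disjoint_family_on modified (\<Union>q\<in>Q. restrict_op b L q)"
  unfolding disjoint_family_on_def
proof (intro ballI impI)
  fix r1 r2 assume r: "r1 \<in> (\<Union>q\<in>Q. restrict_op b L q)" "r2 \<in> (\<Union>q\<in>Q. restrict_op b L q)" "r1 \<noteq> r2"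
  then obtain q1 q2 where q: "q1 \<in> Q" "r1 \<in> restrict_op b L q1" "q2 \<in> Q" "r2 \<in> restrict_op b L q2"
    by blast
  moreover have "q1 \<noteq> q2"
    using r(3) q(2,4) restrict_op_unique by blast
  ultimately have "modified q1 \<inter> modified q2 = {}"
    using disj by (auto simp: disjoint_family_on_def)
  then show "modified r1 \<inter> modified r2 = {}"
    using q by (auto simp: modified_restrict_op)
qed

lemma Union_modified_restrict_ops:
  "\<Union>(modified ` (\<Union>q\<in>Q. restrict_op b L q)) = {k. k < L \<and> b + k \<in> \<Union>(modified ` Q)}"
proof (rule set_eqI)
  fix k
  show "k \<in> \<Union>(modified ` (\<Union>q\<in>Q. restrict_op b L q)) \<longleftrightarrow> k \<in> {k. k < L \<and> b + k \<in> \<Union>(modified ` Q)}"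
  proof
    assume "k \<in> \<Union>(modified ` (\<Union>q\<in>Q. restrict_op b L q))"
    then obtain q r where "q \<in> Q" "r \<in> restrict_op b L q" "k \<in> modified r"
      by blast
    then show "k \<in> {k. k < L \<and> b + k \<in> \<Union>(modified ` Q)}"
      by (auto simp: modified_restrict_op)
  next
    assume "k \<in> {k. k < L \<and> b + k \<in> \<Union>(modified ` Q)}"
    then obtain q where q: "q \<in> Q" "b + k \<in> modified q" and "k < L"
      by auto
    then obtain r where "r \<in> restrict_op b L q" "k \<in> modified r"
      using restrict_op_covers by blast
    with q(1) show "k \<in> \<Union>(modified ` (\<Union>q\<in>Q. restrict_op b L q))"
      by blast
  qed
qed

lemma cover_restrict:
  assumes cov: "cover Q y M" and len: "b + L \<le> length y"
  obtains Q' where "cover Q' (take L (drop b y)) {k. k < L \<and> b + k \<in> M}" and "card Q' \<le> card Q"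
proof -
  have "cover (\<Union>q\<in>Q. restrict_op b L q) (take L (drop b y)) {k. k < L \<and> b + k \<in> M}"
    using cov len disjoint_family_on_restrict_ops Union_modified_restrict_ops
    by (auto simp: cover_def intro: applicable_restrict_op)
  moreover have "card (\<Union>q\<in>Q. restrict_op b L q) \<le> card Q"
    using cov by (simp add: cover_def card_restrict_ops_le)
  ultimately show ?thesis
    by (rule that)
qed

lemma dist_tilde_factor_le:
  assumes "length x = length y" and "b + L \<le> length y"
  shows "dist_tilde (take L (drop b y)) (take L (drop b x)) \<le> dist_tilde y x"
proof -
  obtain Q where Q: "cover Q y (mismatch y x)" "card Q = dist_tilde y x"
    using assms(1) by (rule minimal_cover_exists)
  obtain Q' where Q': "cover Q' (take L (drop b y)) {k. k < L \<and> b + k \<in> mismatch y x}"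
    and "card Q' \<le> card Q"
    using Q(1) assms(2) by (rule cover_restrict)
  moreover have "{k. k < L \<and> b + k \<in> mismatch y x} = mismatch (take L (drop b y)) (take L (drop b x))"
    using assms by (auto simp: mismatch_def)
  ultimately show ?thesis
    using dist_tilde_le_card_cover[of Q' "take L (drop b y)" "take L (drop b x)"] assms Q(2) by simp
qed

section \<open>Overlaps\<close>

text \<open>Two mismatches rule out distance 0 and a single replacement.\<close>
lemma overlap_if_dist_tilde_le_2:
  assumes l: "1 \<le> l" "l \<le> length f - 1" and dist: "dist_tilde (pre l f) (suf l f) \<le> 2"
    and hg: "h < l" "g < l" "h \<noteq> g"
    and mis: "pre l f ! h \<noteq> suf l f ! h" "pre l f ! g \<noteq> suf l f ! g"
  shows "overlap_type_S f l \<or> tilde_error_overlap 2 f l"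
proof -
  have "length (suf l f) = length (pre l f)"
    using l by (simp add: pre_def suf_def)
  then obtain ps where ps: "transforms ps (pre l f) (suf l f)" "length ps = dist_tilde (pre l f) (suf l f)"
    by (rule dist_tilde_attained)
  have "length ps = 0 \<or> length ps = 1 \<or> length ps = 2"
    using dist ps(2) by linarith
  then consider "ps = []" | p where "ps = [p]" | "length ps = 2"
    by (metis length_0_conv length_Suc_conv One_nat_def)
  then show ?thesis
  proof cases
    case 1
    then show ?thesis
      using ps(1) mis by (simp add: transforms_def)
  next
    case (2 p)
    then have app: "applicable p (pre l f)" and res: "apply_op p (pre l f) = suf l f"
      using ps(1) by (auto simp: transforms_def)
    show ?thesis
    proof (cases p)
      case (R k)
      then have "suf l f = (pre l f)[k := \<not> pre l f ! k]"
        using res by (simp add: repl_def)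
      then have "suf l f ! j = pre l f ! j" if "j \<noteq> k" for j
        using that by simp
      then show ?thesis
        using mis hg(3) by metis
    next
      case (S k)
      then show ?thesis
        using app res ps(2) l 2 by (auto simp: overlap_type_S_def tilde_error_overlap_def)
    qed
  next
    case 3
    then show ?thesis
      using ps(2) l by (simp add: tilde_error_overlap_def)
  qed
qed

text \<open>If \<open>f\<close> occurs at \<open>a\<close> in \<open>x\<close> and at \<open>b > a\<close> in \<open>y\<close>, the overlap of the two occurrences
  compares a factor of \<open>y\<close> (a prefix of \<open>f\<close>) with the same factor of \<open>x\<close> (a suffix of \<open>f\<close>).\<close>
lemma overlap_of_shifted_occurrences:
  assumes occ: "occurs_at f a x" "occurs_at f b y" and len: "length y = length x"
    and ab: "a < b" and hg: "b \<le> h" "h < g" "g < a + length f"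
    and mis: "x ! h \<noteq> y ! h" "x ! g \<noteq> y ! g"
    and dist: "dist_tilde y x \<le> 2"
  shows "overlap_type_S f (a + length f - b) \<or> tilde_error_overlap 2 f (a + length f - b)"
proof -
  define l where "l = a + length f - b"
  have window: "b + l \<le> length y"
    using occ(1) len hg by (auto simp: occurs_at_def l_def)
  have pre: "pre l f = take l (drop b y)"
  proof (rule nth_equalityI)
    fix k assume "k < length (pre l f)"
    then show "pre l f ! k = take l (drop b y) ! k"
      using occurs_at_nth[OF occ(2), of k] window ab by (simp add: pre_def l_def)
  qed (use window ab in \<open>simp add: pre_def l_def\<close>)
  have suf: "suf l f = take l (drop b x)"
  proof (rule nth_equalityI)
    fix k assume "k < length (suf l f)"
    then show "suf l f ! k = take l (drop b x) ! k"
      using occurs_at_nth[OF occ(1), of "b - a + k"] window ab len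
      by (simp add: suf_def l_def add.commute)
  qed (use window ab len in \<open>simp add: suf_def l_def\<close>)
  have "dist_tilde (pre l f) (suf l f) \<le> 2"
    using dist_tilde_factor_le[OF len[symmetric] window] dist by (simp add: pre suf)
  moreover have bounds: "1 \<le> l" "l \<le> length f - 1" "h - b < l" "g - b < l" "h - b \<noteq> g - b"
    using hg ab by (auto simp: l_def)
  moreover have "pre l f ! (h - b) \<noteq> suf l f ! (h - b)" "pre l f ! (g - b) \<noteq> suf l f ! (g - b)"
    using mis hg window len bounds by (auto simp: pre suf)
  ultimately show ?thesis
    unfolding l_def[symmetric] by (intro overlap_if_dist_tilde_le_2)
qed

lemma dist_tilde_flip_pair_le:
  assumes "applicable p u" "applicable q u" "modified p \<inter> modified q = {}"
  shows "dist_tilde (flip (modified q) u) (flip (modified p) u) \<le> 2"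
proof -
  have "cover {p, q} (flip (modified q) u) (mismatch (flip (modified q) u) (flip (modified p) u))"
    using assms modified_subset_applicable[OF assms(1)] modified_subset_applicable[OF assms(2)]
    by (auto simp: cover_def disjoint_family_on_def mismatch_flip_flip applicable_flip Int_commute)
  moreover have "card {p, q} \<le> 2"
    by (simp add: card_insert_if)
  ultimately show ?thesis
    using dist_tilde_le_card_cover by fastforce
qed

lemma overlap_of_two_operations:
  assumes app: "applicable p u" "applicable q u" and disj: "modified p \<inter> modified q = {}"
    and hg: "h \<in> modified p" "g \<in> modified q" "h < g"
    and occ: "occurs_at f a (flip (modified p) u)" "occurs_at f b (flip (modified q) u)"
    and windows: "a \<le> h" "g < a + length f" "b \<le> h" "g < b + length f"
  shows "\<exists>l. overlap_type_S f l \<or> tilde_error_overlap 2 f l"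
proof -
  define x where "x = flip (modified p) u"
  define y where "y = flip (modified q) u"
  have "g < length u"
    using occ(1) windows by (simp add: occurs_at_def)
  then have mis: "x ! h \<noteq> y ! h" "x ! g \<noteq> y ! g"
    using hg disj by (auto simp: x_def y_def)
  have "a \<noteq> b"
    using occurs_at_nth[OF occ(1), of "h - a"] occurs_at_nth[OF occ(2), of "h - b"] windows hg(3) mis(1)
    by (auto simp: x_def y_def)
  have len: "length y = length x"
    by (simp add: x_def y_def)
  have dist: "dist_tilde y x \<le> 2" "dist_tilde x y \<le> 2"
    using dist_tilde_flip_pair_le app disj by (auto simp: x_def y_def Int_commute)
  from \<open>a \<noteq> b\<close> consider "a < b" | "b < a"
    by linarith
  then show ?thesis
  proof cases
    case 1
    have "overlap_type_S f (a + length f - b) \<or> tilde_error_overlap 2 f (a + length f - b)"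
      using occ[folded x_def y_def] len 1 windows(3) hg(3) windows(2) mis dist(1)
      by (rule overlap_of_shifted_occurrences)
    then show ?thesis
      by blast
  next
    case 2
    have "overlap_type_S f (b + length f - a) \<or> tilde_error_overlap 2 f (b + length f - a)"
      using occ(2,1)[folded x_def y_def] len[symmetric] 2 windows(1) hg(3) windows(4)
        mis[symmetric] dist(2)
      by (rule overlap_of_shifted_occurrences)
    then show ?thesis
      by blast
  qed
qed

section \<open>Two operations inside two windows\<close>

fun leftmost :: "op \<Rightarrow> nat" where
  "leftmost (R i) = i"
| "leftmost (S i) = i"

fun rightmost :: "op \<Rightarrow> nat" where
  "rightmost (R i) = i"
| "rightmost (S i) = Suc i"

lemma leftmost_mem: "leftmost p \<in> modified p"
  by (cases p) auto

lemma rightmost_mem: "rightmost p \<in> modified p"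
  by (cases p) auto

lemma modified_between: "k \<in> modified p \<Longrightarrow> leftmost p \<le> k \<and> k \<le> rightmost p"
  by (cases p) auto

lemma rightmost_less_leftmost:
  "modified p \<inter> modified r = {} \<Longrightarrow> leftmost r < leftmost p \<Longrightarrow> rightmost r < leftmost p"
  by (cases r; cases p) auto

lemma inj_on_leftmost: "disjoint_family_on modified Q \<Longrightarrow> inj_on leftmost Q"
  using leftmost_mem unfolding disjoint_family_on_def inj_on_def by (metis disjoint_iff)

lemma le_rightmost_if_leftmost_le:
  assumes disj: "disjoint_family_on modified Q" and "p \<in> Q" "r \<in> Q"
    and "leftmost r \<le> leftmost p" and "t \<in> modified r"
  shows "t \<le> rightmost p"
proof (cases "r = p")
  case False
  then have "leftmost r \<noteq> leftmost p"
    using inj_onD[OF inj_on_leftmost[OF disj] _ assms(3,2)] by auto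
  then have "leftmost r < leftmost p"
    using assms(4) by linarith
  moreover have "modified p \<inter> modified r = {}"
    using disj assms(2,3) False by (auto simp: disjoint_family_on_def)
  ultimately have "rightmost r < leftmost p"
    by (rule rightmost_less_leftmost[rotated])
  moreover have "t \<le> rightmost r"
    using assms(5) modified_between by blast
  ultimately show ?thesis
    using modified_between[OF leftmost_mem, of p] by linarith
qed (use assms(5) modified_between in auto)

lemma last_with_successor:
  fixes key :: "'a \<Rightarrow> nat"
  assumes "finite Q" and "p0 \<in> Q" and "P p0" and succ: "\<And>p. p \<in> Q \<Longrightarrow> P p \<Longrightarrow> \<exists>r\<in>Q. key p < key r"
  obtains p q where "p \<in> Q" "q \<in> Q" "P p" "\<not> P q" "key p < key q"
    and "\<And>r. r \<in> Q \<Longrightarrow> key p < key r \<Longrightarrow> key q \<le> key r"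
proof -
  define K where "K = key ` {p\<in>Q. P p}"
  have K: "finite K" "K \<noteq> {}"
    using assms(1-3) by (auto simp: K_def)
  from Max_in[OF K] obtain p where p: "p \<in> Q" "P p" "key p = Max K"
    unfolding K_def by auto
  have p_max: "key r \<le> key p" if "r \<in> Q" "P r" for r
    using Max_ge[OF K(1), of "key r"] that p(3) by (simp add: K_def)
  obtain r where "r \<in> Q" "key p < key r"
    using succ[OF p(1,2)] by auto
  with ex_has_least_nat[of "\<lambda>r. r \<in> Q \<and> key p < key r" r key]
  obtain q where q: "q \<in> Q" "key p < key q" and q_min: "\<forall>r. r \<in> Q \<and> key p < key r \<longrightarrow> key q \<le> key r"
    by auto
  have "\<not> P q"
    using p_max q by fastforce
  with p q show ?thesis
    by (intro that) (use q_min in auto)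
qed

text \<open>Take the rightmost operation \<open>p\<close> whose window reaches a later operation, and the next
  operation \<open>q\<close>: the window of \<open>q\<close> must reach back to \<open>p\<close> or further.\<close>
lemma consecutive_pair_of_operations:
  fixes A :: "op \<Rightarrow> nat"
  assumes fin: "finite Q" and disj: "disjoint_family_on modified Q" and "Q \<noteq> {}"
    and other: "\<And>p. p \<in> Q \<Longrightarrow> \<exists>r\<in>Q. r \<noteq> p \<and> modified r \<inter> {A p..<A p + n} \<noteq> {}"
  obtains p q where "p \<in> Q" "q \<in> Q" "leftmost p < leftmost q"
    and "\<exists>r\<in>Q. leftmost q \<le> leftmost r \<and> modified r \<inter> {A p..<A p + n} \<noteq> {}"
    and "\<exists>r\<in>Q. leftmost r \<le> leftmost p \<and> modified r \<inter> {A q..<A q + n} \<noteq> {}"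
proof -
  define right where
    "right p \<longleftrightarrow> (\<exists>r\<in>Q. leftmost p < leftmost r \<and> modified r \<inter> {A p..<A p + n} \<noteq> {})" for p
  have later_if_distinct: "leftmost p < leftmost r \<or> leftmost r < leftmost p"
    if "p \<in> Q" "r \<in> Q" "r \<noteq> p" for p r
    using that inj_onD[OF inj_on_leftmost[OF disj]] by (metis linorder_neqE_nat)
  from \<open>Q \<noteq> {}\<close> obtain r0 where "r0 \<in> Q"
    by auto
  with ex_has_least_nat[of "\<lambda>r. r \<in> Q" r0 leftmost]
  obtain p0 where p0: "p0 \<in> Q" and p0_min: "\<forall>r. r \<in> Q \<longrightarrow> leftmost p0 \<le> leftmost r"
    by auto
  have right_p0: "right p0"
    using other[OF p0] later_if_distinct[OF p0] p0_min unfolding right_def by (meson leD)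
  have succ: "\<And>p. p \<in> Q \<Longrightarrow> right p \<Longrightarrow> \<exists>r\<in>Q. leftmost p < leftmost r"
    unfolding right_def by auto
  obtain p q where pq: "p \<in> Q" "q \<in> Q" "right p" "\<not> right q" "leftmost p < leftmost q"
    and next_q: "\<And>r. r \<in> Q \<Longrightarrow> leftmost p < leftmost r \<Longrightarrow> leftmost q \<le> leftmost r"
    by (rule last_with_successor[where P = right and key = leftmost, OF fin p0 right_p0 succ]) auto
  have "\<exists>r\<in>Q. leftmost q \<le> leftmost r \<and> modified r \<inter> {A p..<A p + n} \<noteq> {}"
    using pq(3) next_q unfolding right_def by blast
  moreover have "\<exists>r\<in>Q. leftmost r \<le> leftmost p \<and> modified r \<inter> {A q..<A q + n} \<noteq> {}"
    using other[OF pq(2)] later_if_distinct[OF pq(2)] pq(4) next_q unfolding right_def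
    by (meson not_le)
  ultimately show ?thesis
    using pq(1,2,5) by (intro that)
qed

lemma crossing_pair_of_operations:
  fixes A :: "op \<Rightarrow> nat"
  assumes fin: "finite Q" and disj: "disjoint_family_on modified Q" and "Q \<noteq> {}"
    and own: "\<And>p. p \<in> Q \<Longrightarrow> modified p \<inter> {A p..<A p + n} \<noteq> {}"
    and other: "\<And>p. p \<in> Q \<Longrightarrow> \<exists>r\<in>Q. r \<noteq> p \<and> modified r \<inter> {A p..<A p + n} \<noteq> {}"
  obtains p q where "p \<in> Q" "q \<in> Q" "leftmost p < leftmost q"
    and "A p \<le> rightmost p" "leftmost q < A p + n" "A q \<le> rightmost p" "leftmost q < A q + n"
proof -
  obtain p q where pq: "p \<in> Q" "q \<in> Q" "leftmost p < leftmost q"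
    and reach_forward: "\<exists>r\<in>Q. leftmost q \<le> leftmost r \<and> modified r \<inter> {A p..<A p + n} \<noteq> {}"
    and reach_back: "\<exists>r\<in>Q. leftmost r \<le> leftmost p \<and> modified r \<inter> {A q..<A q + n} \<noteq> {}"
    using fin disj \<open>Q \<noteq> {}\<close> other by (rule consecutive_pair_of_operations)
  have "A p \<le> rightmost p"
    using own[OF pq(1)] modified_between by fastforce
  moreover have "leftmost q < A p + n"
    using reach_forward modified_between by fastforce
  moreover have "A q \<le> rightmost p"
    using reach_back le_rightmost_if_leftmost_le[OF disj pq(1)] by fastforce
  moreover have "leftmost q < A q + n"
    using own[OF pq(2)] modified_between by fastforce
  ultimately show ?thesis
    using pq by (intro that)
qed

lemma overlap_if_cover_blocked:
  assumes cov: "cover Q u (mismatch u v)" and len: "length v = length u"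
    and free: "free f u" "free f v" and "Q \<noteq> {}"
    and blocked: "\<And>p. p \<in> Q \<Longrightarrow> \<not> free f (apply_op p u)"
  shows "\<exists>l. overlap_type_S f l \<or> tilde_error_overlap 2 f l"
proof -
  have "\<forall>p\<in>Q. \<exists>a. occurs_at f a (flip (modified p) u)"
    using blocked cov by (auto simp: free_def sublist_iff_occurs_at cover_def apply_op_eq_flip)
  then obtain A where A: "\<And>p. p \<in> Q \<Longrightarrow> occurs_at f (A p) (flip (modified p) u)"
    by metis
  have not_u: "\<not> occurs_at f a (flip {} u)" and not_v: "\<not> occurs_at f a (flip (\<Union>(modified ` Q)) u)"
    for a
    using free cov len by (auto simp: free_def sublist_iff_occurs_at cover_def flip_mismatch)
  have own: "modified p \<inter> {A p..<A p + length f} \<noteq> {}" if "p \<in> Q" for p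
    using occurrence_meets_difference[OF A[OF that] not_u] by auto
  have other: "\<exists>r\<in>Q. r \<noteq> p \<and> modified r \<inter> {A p..<A p + length f} \<noteq> {}" if p: "p \<in> Q" for p
  proof -
    obtain r k where "r \<in> Q" "k \<in> modified r" "k \<notin> modified p" "A p \<le> k" "k < A p + length f"
      using occurrence_meets_difference[OF A[OF p] not_v] p by auto
    then show ?thesis
      by (intro bexI[of _ r]) auto
  qed
  obtain p q where pq: "p \<in> Q" "q \<in> Q" "leftmost p < leftmost q"
    and windows: "A p \<le> rightmost p" "leftmost q < A p + length f"
      "A q \<le> rightmost p" "leftmost q < A q + length f"
    using cov \<open>Q \<noteq> {}\<close> own other unfolding cover_def
    by (elim conjE crossing_pair_of_operations[of Q A "length f"]) auto
  have disj: "modified p \<inter> modified q = {}"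
    using cov pq unfolding cover_def disjoint_family_on_def by (metis less_irrefl)
  have "rightmost p < leftmost q"
    using disj pq(3) by (intro rightmost_less_leftmost) (auto simp: Int_commute)
  moreover have "applicable p u" "applicable q u"
    using cov pq by (auto simp: cover_def)
  ultimately show ?thesis
    using disj rightmost_mem leftmost_mem A[OF pq(1)] A[OF pq(2)] windows
    by (intro overlap_of_two_operations[of p u q "rightmost p" "leftmost q"])
qed

lemma cover_apply_member:
  assumes cov: "cover Q u (mismatch u v)" and p: "p \<in> Q" and len: "length v = length u"
  shows "cover (Q - {p}) (apply_op p u) (mismatch (apply_op p u) v)"
proof -
  have app: "applicable p u" and covered: "modified p \<subseteq> mismatch u v"
    using cov p by (auto simp: cover_def)
  have disj: "\<forall>q\<in>Q - {p}. modified q \<inter> modified p = {}"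
    using cov p unfolding cover_def disjoint_family_on_def by blast
  have "cover (Q - {p}) u (\<Union>(modified ` (Q - {p})))"
    using cov by (rule cover_subset) auto
  then have "cover (Q - {p}) (flip (modified p) u) (\<Union>(modified ` (Q - {p})))"
    using disj by (rule cover_flip)
  moreover have "mismatch (flip (modified p) u) v = mismatch u v - modified p"
    using len covered by (auto simp: mismatch_def subset_iff split: if_splits)
  moreover have "mismatch u v - modified p = \<Union>(modified ` (Q - {p}))"
    using cov disj p by (auto simp: cover_def)
  ultimately show ?thesis
    using app by (simp add: apply_op_eq_flip)
qed

lemma dist_tilde_apply_member:
  assumes cov: "cover Q u (mismatch u v)" and card: "card Q = dist_tilde u v"
    and p: "p \<in> Q" and len: "length v = length u"
  shows "dist_tilde u v = Suc (dist_tilde (apply_op p u) v)"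
proof -
  have app: "applicable p u"
    using cov p by (simp add: cover_def)
  have "dist_tilde (apply_op p u) v \<le> card (Q - {p})"
    using cover_apply_member[OF cov p len] len by (simp add: dist_tilde_le_card_cover)
  also have "\<dots> = dist_tilde u v - 1"
    using card p by simp
  finally have le: "dist_tilde (apply_op p u) v \<le> dist_tilde u v - 1" .
  have "length v = length (apply_op p u)"
    using len by simp
  then obtain ps where "transforms ps (apply_op p u) v" "length ps = dist_tilde (apply_op p u) v"
    by (rule dist_tilde_attained)
  then have "dist_tilde u v \<le> Suc (dist_tilde (apply_op p u) v)"
    using app dist_tilde_le_length[of "p # ps" u v] by (simp add: transforms_def)
  moreover have "0 < card Q"
    using cov p by (auto simp: cover_def card_gt_0_iff)
  then have "dist_tilde u v \<noteq> 0"
    using card by simp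
  ultimately show ?thesis
    using le by linarith
qed

lemma Union_modified_minimal_transf:
  "minimal_transf ps u v \<Longrightarrow> \<Union>(modified ` set ps) = mismatch u v"
proof -
  assume "minimal_transf ps u v"
  then have valid: "valid_ops ps u" and res: "result ps u = v" and disj: "disjoint_ops ps"
    by (auto simp: minimal_transf_iff transforms_def)
  have "mismatch u v = \<Union>(modified ` set ps) \<inter> {..<length u}"
    using result_disjoint_ops[OF valid disj] res mismatch_flip by metis
  also have "\<dots> = \<Union>(modified ` set ps)"
    using valid_ops_modified_subset[OF valid] by blast
  finally show ?thesis
    by simp
qed

lemma minimal_transf_Cons:
  assumes app: "applicable p u" and ps: "minimal_transf ps (apply_op p u) v"
    and dist: "dist_tilde u v = Suc (dist_tilde (apply_op p u) v)"
    and disj: "modified p \<inter> mismatch (apply_op p u) v = {}"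
  shows "minimal_transf (p # ps) u v"
proof -
  have "\<forall>q\<in>set ps. modified p \<inter> modified q = {}"
    using disj Union_modified_minimal_transf[OF ps] by blast
  then show ?thesis
    using ps app dist by (auto simp: minimal_transf_iff transforms_def disjoint_ops_Cons)
qed

lemma free_minimal_transf_exists:
  assumes no_overlap: "\<nexists>l. overlap_type_S f l \<or> tilde_error_overlap 2 f l"
    and "length v = length u" and "free f u" and "free f v"
  shows "\<exists>ps. minimal_transf ps u v \<and> (\<forall>w\<in>set (trace ps u). free f w)"
  using assms(2-)
proof (induction "dist_tilde u v" arbitrary: u)
  case 0
  obtain ps where "transforms ps u v" "length ps = 0"
    using 0 by (metis dist_tilde_attained)
  then have "minimal_transf [] u v" "u = v"
    using 0 by (auto simp: minimal_transf_iff transforms_def disjoint_ops_def disjoint_family_on_def)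
  with 0 show ?case
    by (intro exI[of _ "[]"]) simp
next
  case (Suc d)
  obtain Q where cov: "cover Q u (mismatch u v)" and card: "card Q = dist_tilde u v"
    using Suc.prems(1) by (rule minimal_cover_exists)
  then have "Q \<noteq> {}"
    using Suc.hyps(2) by auto
  then obtain p where p: "p \<in> Q" and free_p: "free f (apply_op p u)"
    using overlap_if_cover_blocked[OF cov Suc.prems] no_overlap by blast
  have dist: "dist_tilde u v = Suc (dist_tilde (apply_op p u) v)"
    using cov card p Suc.prems(1) by (rule dist_tilde_apply_member)
  obtain ps where ps: "minimal_transf ps (apply_op p u) v" "\<forall>w\<in>set (trace ps (apply_op p u)). free f w"
    using Suc.hyps(1)[of "apply_op p u"] Suc.hyps(2) dist free_p Suc.prems by auto
  have "cover (Q - {p}) (apply_op p u) (mismatch (apply_op p u) v)"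
    using cov p Suc.prems(1) by (rule cover_apply_member)
  then have "mismatch (apply_op p u) v = \<Union>(modified ` (Q - {p}))"
    by (simp add: cover_def)
  then have "modified p \<inter> mismatch (apply_op p u) v = {}"
    using cov p unfolding cover_def disjoint_family_on_def by blast
  with cov p ps(1) dist have "minimal_transf (p # ps) u v"
    by (intro minimal_transf_Cons) (auto simp: cover_def)
  with ps(2) Suc.prems(2) show ?case
    by (intro exI[of _ "p # ps"]) simp
qed

theorem proposition3:
  fixes f :: "bool list"
  assumes "\<not> tilde_isometric f"
  shows "(\<exists>l. overlap_type_S f l) \<or> (\<exists>l. tilde_error_overlap 2 f l)"
proof (rule ccontr)
  assume "\<not> ?thesis"
  then have no_overlap: "\<nexists>l. overlap_type_S f l \<or> tilde_error_overlap 2 f l"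
    by blast
  have "tilde_isometric f"
    using free_minimal_transf_exists[OF no_overlap] unfolding tilde_isometric_def by auto
  with assms show False
    by contradiction
qed

end
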